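(* Let $r\ge 1$ be an integer. Define $(B^{(r)}(n,k))_{n\ge0,\,k\in\mathbb{Z}}$ by $B^{(r)}(0,0)=1$, $B^{(r)}(0,k)=0$ for $k\neq0$, $B^{(r)}(n,k)=0$ for $k<0$, and for $n\ge1$ and all $k$, \[ B^{(r)}(n,k)=\bigl(rn-k+1-r\bigr)B^{(r)}(n-1,k-1)+(k+1)B^{(r)}(n-1,k). \] Then for every $n\ge 1$ and every integer $k$, $B^{(r)}(n,k)$ equals the number of increasing plane full $(r+1)$-ary trees with $n$ internal nodes in which exactly $k+1$ leaves are cadets.
   Context: An increasing plane full $(r+1)$-ary tree with $n$ internal nodes is a rooted tree in which each internal node has exactly $r+1$ children, linearly ordered (first child, ..., $(r+1)$-st child), each node being either internal or a leaf; the $n$ internal nodes carry the distinct labels $1,\dots,n$, and labels increase along every path from the root (so the root is labelled $1$). Equivalently, such trees are built by starting from a single leaf and, at step $i=1,\dots,n$, replacing one chosen leaf by an internal node labelled $i$ having $r+1$ new ordered leaf children. A leaf is a cadet if it is the last ($(r+1)$-st) child of its parent. (The numbers $B^{(r)}(n,k)$ are the numbers of Stirling $r$-permutations of $[n]$ with $k$ descents studied by X. He.) *)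

theory Defs
  imports Main
begin

datatype ltree = Leaf | Node nat "ltree list"

fun labs :: "ltree \<Rightarrow> nat list" where
  "labs Leaf = []"
| "labs (Node a ts) = a # concat (map labs ts)"

fun full :: "nat \<Rightarrow> ltree \<Rightarrow> bool" where
  "full r Leaf = True"
| "full r (Node a ts) = (length ts = r + 1 \<and> (\<forall>t\<in>set ts. full r t))"

fun increasing :: "ltree \<Rightarrow> bool" where
  "increasing Leaf = True"
| "increasing (Node a ts) = (\<forall>t\<in>set ts. (\<forall>b\<in>set (labs t). a < b) \<and> increasing t)"

definition inc_tree :: "nat \<Rightarrow> nat \<Rightarrow> ltree \<Rightarrow> bool" where
  "inc_tree r n t \<longleftrightarrow> full r t \<and> increasing t \<and> distinct (labs t) \<and> set (labs t) = {1..n}"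

fun cadets :: "ltree \<Rightarrow> nat" where
  "cadets Leaf = 0"
| "cadets (Node a ts) = (if ts \<noteq> [] \<and> last ts = Leaf then 1 else 0) + sum_list (map cadets ts)"

fun B :: "nat \<Rightarrow> nat \<Rightarrow> int \<Rightarrow> int" where
  "B r 0 k = (if k = 0 then 1 else 0)"
| "B r (Suc n) k = (if k < 0 then 0 else
      (int r * int (Suc n) - k + 1 - int r) * B r n (k - 1) + (k + 1) * B r n k)"

end

theory Submission
  imports Defs "HOL-Library.Multiset"
begin

text \<open>
  In an increasing tree with n internal nodes the node labelled n has only leaves as children;
  replacing it by a leaf gives a tree with n - 1 internal nodes and a marked leaf, and conversely
  grafting a node labelled n onto any of the r(n - 1) + 1 leaves of such a tree is a bijection.
  Grafting onto a cadet leaf keeps the number of cadets (the new node brings its own last leaf),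
  grafting onto any other leaf raises it by one. Hence the trees with k + 1 cadets arise from the
  k + 1 cadet leaves of trees with k + 1 cadets and from the r(n - 1) + 1 - k non-cadet leaves of
  trees with k cadets, which is the recurrence defining B.
\<close>

fun subtree_at :: "nat list \<Rightarrow> ltree \<Rightarrow> ltree option" where
  "subtree_at [] t = Some t"
| "subtree_at (j # p) Leaf = None"
| "subtree_at (j # p) (Node a ts) = (if j < length ts then subtree_at p (ts ! j) else None)"

fun replace_at :: "nat list \<Rightarrow> ltree \<Rightarrow> ltree \<Rightarrow> ltree" where
  "replace_at [] u t = u"
| "replace_at (j # p) u Leaf = Leaf"
| "replace_at (j # p) u (Node a ts) = Node a (ts[j := replace_at p u (ts ! j)])"

fun prune :: "nat \<Rightarrow> ltree \<Rightarrow> ltree" where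
  "prune x Leaf = Leaf"
| "prune x (Node a ts) = (if a = x then Leaf else Node a (map (prune x) ts))"

definition leaf_positions :: "ltree \<Rightarrow> nat list set" where
  "leaf_positions t = {p. subtree_at p t = Some Leaf}"

text \<open>Child index r marks a last child only in a full (r+1)-ary tree.\<close>
definition cadet_positions :: "nat \<Rightarrow> ltree \<Rightarrow> nat list set" where
  "cadet_positions r t = {p \<in> leaf_positions t. p \<noteq> [] \<and> last p = r}"

definition sprout :: "nat \<Rightarrow> nat \<Rightarrow> ltree" where
  "sprout r x = Node x (replicate (Suc r) Leaf)"

lemma sprout_simps [simp]:
  "full r (sprout r x)" "increasing (sprout r x)" "labs (sprout r x) = [x]"
  "cadets (sprout r x) = 1" "sprout r x \<noteq> Leaf"
  by (auto simp: sprout_def)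

lemma sum_list_update_add:
  "j < length xs \<Longrightarrow> sum_list (xs[j := x]) + xs ! j = sum_list xs + (x :: 'a :: comm_monoid_add)"
  by (induction xs arbitrary: j) (auto split: nat.splits simp: add_ac)

lemma subtree_at_replace_at_same: "subtree_at p t = Some s \<Longrightarrow> subtree_at p (replace_at p u t) = Some u"
  by (induction p t rule: subtree_at.induct) (auto split: if_splits)

lemma replace_at_subtree_at: "subtree_at p t = Some s \<Longrightarrow> replace_at p s t = t"
  by (induction p t rule: subtree_at.induct) (auto split: if_splits)

lemma replace_at_replace_at: "replace_at p u (replace_at p v t) = replace_at p u t"
proof (induction p u t rule: replace_at.induct)
  case (3 j p u a ts)
  then show ?case by (cases "j < length ts") (simp_all add: list_update_beyond)
qed simp_all

lemma subtree_at_replace_at_other: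
  assumes "subtree_at p t = Some Leaf" "subtree_at q t = Some Leaf" "p \<noteq> q"
  shows "subtree_at q (replace_at p u t) = Some Leaf"
  using assms
proof (induction p arbitrary: q t)
  case Nil
  then show ?case by (cases q) auto
next
  case (Cons j p)
  then obtain a ts where "t = Node a ts" by (cases t) auto
  with Cons show ?case by (cases q; cases "hd q = j") (auto split: if_splits)
qed

lemma full_subtree_at: "subtree_at p t = Some s \<Longrightarrow> full r t \<Longrightarrow> full r s"
  by (induction p t rule: subtree_at.induct) (auto split: if_splits)

lemma increasing_subtree_at: "subtree_at p t = Some s \<Longrightarrow> increasing t \<Longrightarrow> increasing s"
  by (induction p t rule: subtree_at.induct) (auto split: if_splits)

lemma labs_subtree_at: "subtree_at p t = Some s \<Longrightarrow> set (labs s) \<subseteq> set (labs t)"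
  by (induction p t rule: subtree_at.induct) (fastforce split: if_splits)+

lemma subtree_at_label:
  "x \<in> set (labs t) \<Longrightarrow> \<exists>p us. subtree_at p t = Some (Node x us)"
proof (induction t)
  case (Node a ts)
  show ?case
  proof (cases "x = a")
    case True
    then show ?thesis by (intro exI[of _ "[]"] exI[of _ ts]) simp
  next
    case False
    then obtain t' where "t' \<in> set ts" "x \<in> set (labs t')" using Node.prems by auto
    moreover from this obtain p us where "subtree_at p t' = Some (Node x us)"
      using Node.IH by blast
    moreover obtain j where "j < length ts" "ts ! j = t'"
      using \<open>t' \<in> set ts\<close> by (auto simp: in_set_conv_nth)
    ultimately show ?thesis by (intro exI[of _ "j # p"]) auto
  qed
qed simp

lemma full_replace_at: "full r t \<Longrightarrow> full r u \<Longrightarrow> full r (replace_at p u t)"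
proof (induction p u t rule: replace_at.induct)
  case (3 j p u a ts)
  then show ?case
    by (cases "j < length ts")
       (auto simp: list_update_beyond dest!: set_update_subset_insert[THEN subsetD])
qed simp_all

lemma labs_replace_at: "set (labs (replace_at p u t)) \<subseteq> set (labs t) \<union> set (labs u)"
proof (induction p u t rule: replace_at.induct)
  case (3 j p u a ts)
  then show ?case
    by (cases "j < length ts")
       (fastforce simp: list_update_beyond dest!: set_update_subset_insert[THEN subsetD])+
qed simp_all

lemma increasing_replace_at:
  assumes "increasing t" "increasing u" "\<forall>a\<in>set (labs t). \<forall>b\<in>set (labs u). a < b"
  shows "increasing (replace_at p u t)"
  using assms
proof (induction p arbitrary: t)
  case (Cons j p)
  show ?case
  proof (cases t)
    case (Node a ts)
    show ?thesis
    proof (cases "j < length ts")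
      case True
      let ?y = "replace_at p u (ts ! j)"
      have tj: "ts ! j \<in> set ts" using True by simp
      have "increasing ?y"
        using Cons.prems Node tj by (intro Cons.IH) auto
      moreover have "\<forall>b\<in>set (labs ?y). a < b"
        using labs_replace_at[of p u "ts ! j"] Cons.prems Node tj by fastforce
      ultimately show ?thesis
        using Cons.prems Node by (auto dest!: set_update_subset_insert[THEN subsetD])
    qed (use Node Cons.prems in \<open>simp add: list_update_beyond\<close>)
  qed simp
qed simp

lemma mset_labs_replace_at:
  "subtree_at p t = Some s \<Longrightarrow>
   mset (labs (replace_at p u t)) + mset (labs s) = mset (labs t) + mset (labs u)"
proof (induction p arbitrary: t)
  case (Cons j p)
  then obtain a ts where t: "t = Node a ts" and j: "j < length ts"
    and sj: "subtree_at p (ts ! j) = Some s"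
    by (cases t) (auto split: if_splits)
  let ?f = "\<lambda>t. mset (labs t)"
  let ?y = "replace_at p u (ts ! j)"
  have "sum_list (map ?f (ts[j := ?y])) + ?f (ts ! j) = sum_list (map ?f ts) + ?f ?y"
    using sum_list_update_add[of j "map ?f ts" "?f ?y"] j by (simp add: map_update)
  moreover have "?f ?y + ?f s = ?f (ts ! j) + ?f u" using Cons.IH[OF sj] .
  ultimately have "sum_list (map ?f (ts[j := ?y])) + ?f s + ?f (ts ! j) =
      sum_list (map ?f ts) + ?f u + ?f (ts ! j)"
    by (metis add.assoc add.commute)
  then have "sum_list (map ?f (ts[j := ?y])) + ?f s = sum_list (map ?f ts) + ?f u"
    by simp
  then show ?case using t by (simp add: mset_concat comp_def)
qed (simp add: add.commute)

lemma prune_notin: "x \<notin> set (labs t) \<Longrightarrow> prune x t = t"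
  by (induction t) (auto intro: map_idI)

lemma prune_replace_at:
  "subtree_at p t = Some Leaf \<Longrightarrow> x \<notin> set (labs t) \<Longrightarrow> prune x (replace_at p (Node x us) t) = t"
proof (induction p arbitrary: t)
  case (Cons j p)
  then obtain a ts where t: "t = Node a ts" and j: "j < length ts"
    and sj: "subtree_at p (ts ! j) = Some Leaf"
    by (cases t) (auto split: if_splits)
  have "map (prune x) ts = ts" using Cons.prems t by (auto intro!: map_idI prune_notin)
  moreover have "prune x (replace_at p (Node x us) (ts ! j)) = ts ! j"
    using Cons.IH[OF sj] Cons.prems t j by auto
  ultimately show ?case using Cons.prems t j by (auto simp: map_update)
qed simp

lemma leaf_positions_Leaf: "leaf_positions Leaf = {[]}"
proof (rule set_eqI)
  show "p \<in> leaf_positions Leaf \<longleftrightarrow> p \<in> {[]}" for p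
    by (cases p) (auto simp: leaf_positions_def)
qed

lemma leaf_positions_Node:
  "leaf_positions (Node a ts) = (\<Union>j<length ts. Cons j ` leaf_positions (ts ! j))"
proof (rule set_eqI)
  show "p \<in> leaf_positions (Node a ts) \<longleftrightarrow> p \<in> (\<Union>j<length ts. Cons j ` leaf_positions (ts ! j))" for p
    by (cases p) (auto simp: leaf_positions_def split: if_splits)
qed

lemma cadet_positions_Node:
  assumes "length ts = Suc r"
  shows "cadet_positions r (Node a ts) =
    (\<Union>j<length ts. Cons j ` cadet_positions r (ts ! j)) \<union> (if ts ! r = Leaf then {[r]} else {})"
proof (rule set_eqI)
  fix p
  show "p \<in> cadet_positions r (Node a ts) \<longleftrightarrow>
    p \<in> (\<Union>j<length ts. Cons j ` cadet_positions r (ts ! j)) \<union> (if ts ! r = Leaf then {[r]} else {})"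
  proof (cases p)
    case (Cons j q)
    have "p \<in> (\<Union>j<length ts. Cons j ` cadet_positions r (ts ! j)) \<longleftrightarrow>
      j < length ts \<and> q \<in> cadet_positions r (ts ! j)"
      using Cons by auto
    moreover have "p \<in> cadet_positions r (Node a ts) \<longleftrightarrow>
      (j < length ts \<and> q \<in> cadet_positions r (ts ! j)) \<or> (j = r \<and> q = [] \<and> ts ! r = Leaf)"
      using Cons assms by (cases q) (auto simp: cadet_positions_def leaf_positions_def)
    ultimately show ?thesis using Cons by auto
  qed (auto simp: cadet_positions_def)
qed

lemma cadet_positions_subset: "cadet_positions r t \<subseteq> leaf_positions t"
  by (auto simp: cadet_positions_def)

lemma finite_leaf_positions: "finite (leaf_positions t)"
  by (induction t) (auto simp: leaf_positions_Leaf leaf_positions_Node)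

lemma finite_cadet_positions: "finite (cadet_positions r t)"
  using finite_subset[OF cadet_positions_subset finite_leaf_positions] .

lemma card_UN_Cons:
  fixes A :: "nat \<Rightarrow> nat list set" and n :: nat
  assumes "\<And>j. finite (A j)"
  shows "card (\<Union>j<n. Cons j ` A j) = (\<Sum>j<n. card (A j))"
proof -
  have "card (\<Union>j<n. Cons j ` A j) = (\<Sum>j<n. card (Cons j ` A j))"
    using assms by (intro card_UN_disjoint) auto
  also have "\<dots> = (\<Sum>j<n. card (A j))"
    by (simp add: card_image)
  finally show ?thesis .
qed

lemma card_leaf_positions: "full r t \<Longrightarrow> card (leaf_positions t) = r * length (labs t) + 1"
proof (induction t)
  case (Node a ts)
  have "card (leaf_positions (Node a ts)) = (\<Sum>j<length ts. card (leaf_positions (ts ! j)))"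
    unfolding leaf_positions_Node by (rule card_UN_Cons) (rule finite_leaf_positions)
  also have "\<dots> = (\<Sum>j<length ts. r * length (labs (ts ! j)) + 1)"
    using Node by (intro sum.cong) auto
  also have "\<dots> = r * (\<Sum>j<length ts. length (labs (ts ! j))) + length ts"
    unfolding sum.distrib by (simp add: sum_distrib_left)
  also have "(\<Sum>j<length ts. length (labs (ts ! j))) = length (concat (map labs ts))"
    by (simp add: length_concat sum_list_sum_nth atLeast0LessThan)
  finally show ?case using Node.prems by simp
qed (simp add: leaf_positions_Leaf)

lemma card_cadet_positions: "full r t \<Longrightarrow> card (cadet_positions r t) = cadets t"
proof (induction t)
  case Leaf
  then show ?case by (simp add: cadet_positions_def leaf_positions_Leaf)
next
  case (Node a ts)
  have len: "length ts = Suc r" using Node.prems by simp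
  let ?A = "\<Union>j<length ts. Cons j ` cadet_positions r (ts ! j)"
  let ?B = "(if ts ! r = Leaf then {[r]} else {}) :: nat list set"
  have "finite ?A" by (simp add: finite_cadet_positions)
  then have "card (cadet_positions r (Node a ts)) = card ?A + card ?B"
    unfolding cadet_positions_Node[OF len]
    by (rule card_Un_disjoint) (auto simp: cadet_positions_def)
  also have "card ?A = (\<Sum>j<length ts. cadets (ts ! j))"
    using Node by (simp add: card_UN_Cons finite_cadet_positions)
  also have "\<dots> = sum_list (map cadets ts)"
    by (simp add: sum_list_sum_nth atLeast0LessThan)
  finally show ?case
    using len by (cases ts rule: rev_cases) (auto simp: nth_append)
qed

lemma replace_at_ne_Leaf: "p \<noteq> [] \<Longrightarrow> t \<noteq> Leaf \<Longrightarrow> replace_at p u t \<noteq> Leaf"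
  by (cases p; cases t) auto

lemma cadets_replace_at:
  assumes u: "cadets u = 1" "u \<noteq> Leaf"
  shows "full r t \<Longrightarrow> subtree_at p t = Some Leaf \<Longrightarrow>
    cadets (replace_at p u t) = cadets t + (if p \<in> cadet_positions r t then 0 else 1)"
proof (induction p arbitrary: t)
  case Nil
  then show ?case using u by (simp add: cadet_positions_def)
next
  case (Cons j q)
  then obtain a ts where t: "t = Node a ts" and j: "j < length ts"
    and sj: "subtree_at q (ts ! j) = Some Leaf"
    by (cases t) (auto split: if_splits)
  have len: "length ts = Suc r" using Cons.prems t by simp
  then have ne: "ts \<noteq> []" by auto
  let ?y = "replace_at q u (ts ! j)"
  have sum: "sum_list (map cadets (ts[j := ?y])) + cadets (ts ! j) = sum_list (map cadets ts) + cadets ?y"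
    using sum_list_update_add[of j "map cadets ts" "cadets ?y"] j by (simp add: map_update)
  have last_upd: "last (ts[j := ?y]) = (if j = r then ?y else last ts)"
    using last_list_update[OF ne] len by simp
  have last_ts: "last ts = ts ! r" using len ne by (simp add: last_conv_nth)
  have mem: "j # q \<in> cadet_positions r t \<longleftrightarrow> (q = [] \<and> j = r) \<or> (q \<noteq> [] \<and> q \<in> cadet_positions r (ts ! j))"
    using t j sj by (auto simp: cadet_positions_def leaf_positions_def)
  have "cadets t = (if last ts = Leaf then 1 else 0) + sum_list (map cadets ts)"
    and "cadets (replace_at (j # q) u t) =
      (if last (ts[j := ?y]) = Leaf then 1 else 0) + sum_list (map cadets (ts[j := ?y]))"
    using t ne by simp_all
  moreover have "q = [] \<Longrightarrow> ts ! j = Leaf \<and> ?y = u" using sj by simp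
  moreover have "ts ! j \<noteq> Leaf \<and> ?y \<noteq> Leaf" if "q \<noteq> []"
  proof -
    have "ts ! j \<noteq> Leaf" using sj that by (cases q) auto
    with that show ?thesis using replace_at_ne_Leaf by blast
  qed
  moreover have "cadets ?y = cadets (ts ! j) + (if q \<in> cadet_positions r (ts ! j) then 0 else 1)"
    using Cons.IH sj Cons.prems t j by simp
  ultimately show ?case
    using sum last_upd last_ts mem u by (cases "q = []"; cases "j = r") auto
qed

lemma inc_tree_iff_mset:
  "inc_tree r n t \<longleftrightarrow> full r t \<and> increasing t \<and> mset (labs t) = mset [1..<Suc n]"
proof -
  have "distinct [1..<Suc n]" and "set [1..<Suc n] = {1..n}" by auto
  then show ?thesis
    unfolding inc_tree_def
    by (metis set_eq_iff_mset_eq_distinct mset_eq_imp_distinct_iff mset_eq_setD)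
qed

lemma length_labs_inc_tree: "inc_tree r n t \<Longrightarrow> length (labs t) = n"
  by (metis inc_tree_iff_mset length_upt diff_Suc_1 mset_eq_length)

lemma inc_tree_0_iff: "inc_tree r 0 t \<longleftrightarrow> t = Leaf"
  by (cases t) (auto simp: inc_tree_def)

definition graft :: "nat \<Rightarrow> nat \<Rightarrow> ltree \<times> nat list \<Rightarrow> ltree" where
  "graft r x = (\<lambda>(t, p). replace_at p (sprout r x) t)"

lemma inc_tree_graft:
  assumes "inc_tree r m t" "p \<in> leaf_positions t"
  shows "inc_tree r (Suc m) (graft r (Suc m) (t, p))"
proof -
  have "subtree_at p t = Some Leaf" using assms(2) by (simp add: leaf_positions_def)
  from mset_labs_replace_at[OF this, of "sprout r (Suc m)"]
  have "mset (labs (graft r (Suc m) (t, p))) = mset [1..<Suc (Suc m)]"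
    using assms(1) by (simp add: inc_tree_iff_mset graft_def)
  moreover have "full r (graft r (Suc m) (t, p))" and "increasing (graft r (Suc m) (t, p))"
    using assms(1) by (auto simp: inc_tree_def graft_def intro: full_replace_at increasing_replace_at)
  ultimately show ?thesis by (simp add: inc_tree_iff_mset)
qed

lemma subtree_at_max_label:
  assumes "subtree_at p t = Some (Node x us)" "full r t" "increasing t" "\<forall>y\<in>set (labs t). y \<le> x"
  shows "subtree_at p t = Some (sprout r x)"
proof -
  have "u = Leaf" if "u \<in> set us" for u
  proof (cases u)
    case (Node y vs)
    have "increasing (Node x us)" using increasing_subtree_at assms(1,3) .
    then have "x < y" using that Node by auto
    moreover have "y \<in> set (labs t)"
      using labs_subtree_at[OF assms(1)] that Node by force
    ultimately show ?thesis using assms(4) by fastforce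
  qed
  moreover have "length us = Suc r" using full_subtree_at[OF assms(1,2)] by simp
  ultimately have "us = replicate (Suc r) Leaf"
    by (metis replicate_length_same)
  then show ?thesis
    using assms(1) by (simp add: sprout_def)
qed

lemma inc_tree_Suc_obtain_graft:
  assumes "inc_tree r (Suc m) t'"
  obtains t p where "inc_tree r m t" "p \<in> leaf_positions t" "t' = graft r (Suc m) (t, p)"
proof -
  have "Suc m \<in> set (labs t')" using assms by (simp add: inc_tree_def)
  then obtain p us where "subtree_at p t' = Some (Node (Suc m) us)"
    using subtree_at_label by blast
  then have sp: "subtree_at p t' = Some (sprout r (Suc m))"
    using assms by (intro subtree_at_max_label) (auto simp: inc_tree_def)
  define t where "t = replace_at p Leaf t'"
  have "t' = graft r (Suc m) (t, p)"
    using replace_at_subtree_at[OF sp] by (simp add: t_def graft_def replace_at_replace_at)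
  moreover have "p \<in> leaf_positions t"
    using subtree_at_replace_at_same[OF sp] by (simp add: t_def leaf_positions_def)
  moreover have "mset (labs t) + {#Suc m#} = mset [1..<Suc m] + {#Suc m#}"
    using mset_labs_replace_at[OF sp, of Leaf] assms by (simp add: t_def inc_tree_iff_mset)
  then have "inc_tree r m t"
    using assms by (auto simp: t_def inc_tree_iff_mset inc_tree_def
        intro: full_replace_at increasing_replace_at)
  ultimately show ?thesis using that by blast
qed

lemma inj_on_graft:
  "inj_on (graft r x) (SIGMA t:{t. x \<notin> set (labs t)}. leaf_positions t)"
proof (rule inj_onI, clarsimp)
  fix t p t' p'
  assume "x \<notin> set (labs t)" "p \<in> leaf_positions t" "x \<notin> set (labs t')" "p' \<in> leaf_positions t'"
  then have s: "subtree_at p t = Some Leaf" "subtree_at p' t' = Some Leaf"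
    and "prune x (graft r x (t, p)) = t" "prune x (graft r x (t', p')) = t'"
    by (auto simp: leaf_positions_def graft_def sprout_def prune_replace_at)
  moreover assume eq: "graft r x (t, p) = graft r x (t', p')"
  ultimately have "t = t'" by simp
  moreover have "p = p'"
  proof (rule ccontr)
    assume "p \<noteq> p'"
    then have "subtree_at p' (graft r x (t, p)) = Some Leaf"
      using subtree_at_replace_at_other s \<open>t = t'\<close> by (simp add: graft_def)
    moreover have "subtree_at p' (graft r x (t', p')) = Some (sprout r x)"
      using subtree_at_replace_at_same[OF s(2)] by (simp add: graft_def)
    ultimately show False using eq by simp
  qed
  ultimately show "t = t' \<and> p = p'" ..
qed

definition inc_trees :: "nat \<Rightarrow> nat \<Rightarrow> ltree set" where
  "inc_trees r n = {t. inc_tree r n t}"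

lemma bij_betw_graft:
  "bij_betw (graft r (Suc m)) (SIGMA t:inc_trees r m. leaf_positions t) (inc_trees r (Suc m))"
proof (rule bij_betw_imageI)
  show "inj_on (graft r (Suc m)) (SIGMA t:inc_trees r m. leaf_positions t)"
    by (rule inj_on_subset[OF inj_on_graft]) (auto simp: inc_trees_def inc_tree_def)
  show "graft r (Suc m) ` (SIGMA t:inc_trees r m. leaf_positions t) = inc_trees r (Suc m)"
    using inc_tree_graft inc_tree_Suc_obtain_graft by (fastforce simp: inc_trees_def)
qed

lemma finite_inc_trees: "finite (inc_trees r n)"
proof (induction n)
  case 0
  then show ?case by (simp add: inc_trees_def inc_tree_0_iff)
next
  case (Suc n)
  then have "finite (SIGMA t:inc_trees r n. leaf_positions t)"
    by (simp add: finite_leaf_positions)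
  then show ?case
    using bij_betw_finite[OF bij_betw_graft] by blast
qed

lemma card_graft_fiber:
  assumes "full r t"
  shows "int (card {p \<in> leaf_positions t. int (cadets (graft r x (t, p))) = k + 1}) =
    (if int (cadets t) = k + 1 then k + 1 else 0) +
    (if int (cadets t) = k then int (r * length (labs t) + 1) - k else 0)"
proof -
  have "cadets (graft r x (t, p)) = cadets t + (if p \<in> cadet_positions r t then 0 else 1)"
    if "p \<in> leaf_positions t" for p
    using cadets_replace_at[of "sprout r x" r t p] assms that by (simp add: graft_def leaf_positions_def)
  then have fiber: "{p \<in> leaf_positions t. int (cadets (graft r x (t, p))) = k + 1} =
    (if int (cadets t) = k + 1 then cadet_positions r t else {}) \<union>
    (if int (cadets t) = k then leaf_positions t - cadet_positions r t else {})"
    using cadet_positions_subset[of r t] by (auto split: if_splits)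
  have "card (cadet_positions r t) \<le> card (leaf_positions t)"
    by (rule card_mono[OF finite_leaf_positions cadet_positions_subset])
  then show ?thesis
    unfolding fiber
    using card_cadet_positions[OF assms] card_leaf_positions[OF assms]
    by (auto simp: card_Diff_subset[OF finite_cadet_positions cadet_positions_subset] of_nat_diff)
qed

definition cadet_count :: "nat \<Rightarrow> nat \<Rightarrow> int \<Rightarrow> nat" where
  "cadet_count r n k = card {t. inc_tree r n t \<and> int (cadets t) = k + 1}"

lemma cadet_count_eq_sum:
  "int (cadet_count r n k) = (\<Sum>t\<in>inc_trees r n. if int (cadets t) = k + 1 then 1 else 0)"
  by (simp add: cadet_count_def inc_trees_def finite_inc_trees[unfolded inc_trees_def]
      flip: sum.inter_filter)

lemma cadet_count_Suc:
  "int (cadet_count r (Suc m) k) =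
    (k + 1) * int (cadet_count r m k) + (int (r * m + 1) - k) * int (cadet_count r m (k - 1))"
proof -
  let ?S = "SIGMA t:inc_trees r m. leaf_positions t"
  let ?P = "\<lambda>t. int (cadets t) = k + 1"
  have "{t. inc_tree r (Suc m) t \<and> ?P t} = graft r (Suc m) ` {x \<in> ?S. ?P (graft r (Suc m) x)}"
    using bij_betw_graft[of r m] by (auto simp: bij_betw_def inc_trees_def)
  moreover have "inj_on (graft r (Suc m)) {x \<in> ?S. ?P (graft r (Suc m) x)}"
    using bij_betw_graft[of r m] by (auto simp: bij_betw_def intro: inj_on_subset)
  ultimately have "cadet_count r (Suc m) k = card {x \<in> ?S. ?P (graft r (Suc m) x)}"
    by (simp add: cadet_count_def card_image)
  also have "{x \<in> ?S. ?P (graft r (Suc m) x)} =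
      (SIGMA t:inc_trees r m. {p \<in> leaf_positions t. ?P (graft r (Suc m) (t, p))})"
    by auto
  finally have "int (cadet_count r (Suc m) k) =
      (\<Sum>t\<in>inc_trees r m. int (card {p \<in> leaf_positions t. ?P (graft r (Suc m) (t, p))}))"
    by (simp add: card_SigmaI finite_inc_trees finite_leaf_positions)
  also have "\<dots> = (\<Sum>t\<in>inc_trees r m.
      (k + 1) * (if int (cadets t) = k + 1 then 1 else 0) +
      (int (r * m + 1) - k) * (if int (cadets t) = (k - 1) + 1 then 1 else 0))"
    by (intro sum.cong) (auto simp: card_graft_fiber inc_trees_def inc_tree_def length_labs_inc_tree)
  also have "\<dots> = (k + 1) * int (cadet_count r m k) + (int (r * m + 1) - k) * int (cadet_count r m (k - 1))"
    by (simp only: cadet_count_eq_sum sum.distrib sum_distrib_left)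
  finally show ?thesis .
qed

lemma cadet_count_0: "cadet_count r 0 k = (if k = -1 then 1 else 0)"
proof -
  have "{t. inc_tree r 0 t \<and> int (cadets t) = k + 1} = (if k = -1 then {Leaf} else {})"
    by (auto simp: inc_tree_0_iff)
  then show ?thesis by (simp add: cadet_count_def)
qed

lemma cadet_count_below: "k < -1 \<Longrightarrow> cadet_count r n k = 0"
  by (simp add: cadet_count_def)

theorem mainTheorem3:
  fixes r n :: nat and k :: int
  assumes "r \<ge> 1" and "n \<ge> 1"
  shows "B r n k = int (card {t. inc_tree r n t \<and> int (cadets t) = k + 1})"
proof -
  \<comment> \<open>The induction starts at 1 because at n = 0
    the sides differ: the lone leaf has no parent and so is not a cadet.\<close>
  have "B r n k = int (cadet_count r n k)"
    using assms(2)
  proof (induction n arbitrary: k rule: nat_induct_at_least)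
    case base
    show ?case by (simp add: cadet_count_Suc[of r 0] cadet_count_0)
  next
    case (Suc n)
    have "k < 0 \<Longrightarrow> int (cadet_count r (Suc n) k) = 0"
      by (cases "k = -1") (simp_all add: cadet_count_Suc cadet_count_below)
    then show ?case
      using Suc.IH by (simp add: cadet_count_Suc algebra_simps)
  qed
  then show ?thesis by (simp add: cadet_count_def)
qed

end
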